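(* Let $k \geq 1$ be an integer and let $G=(V,E)$ be a $k$-connected graph with $n \geq 9$ vertices, $e$ edges, minimum degree $\delta$ and maximum degree $\Delta$. If any one of the following five conditions holds, then $G$ is traceable: [1] $$Z_1(G) \geq (n - k - 2)\Delta^2 + \frac{e^2}{2(k + 2)} + \frac{(k + 2) \Delta^3}{2 \delta};$$ [2] $$F(G) \leq (n - k - 2) \delta^3 + \frac{\delta (2 (k + 2)^2 \delta^2 - e^2)}{k + 2};$$ [3] $$F(G) \leq (n - k - 2) \delta^3 + \frac{\delta}{k + 2} \left( 2 (k + 2) \left((k + 2) \delta^2 + \frac{e^2}{n - k - 2}\right) - e^2 - 2 (k + 2) (n - k - 2) \Delta^2\right);$$ [4] $$Inv(G) \leq \frac{n - k - 2}{\Delta} + \frac{2 (k + 2)^2 \delta^2 - e^2}{(k + 2) \Delta^3};$$ [5] $$Inv(G) \leq \frac{n - k - 2}{\Delta} + \frac{1}{(k + 2) \Delta^3} \left( 2 (k + 2) \left((k + 2) \delta^2 + \frac{e^2}{n - k - 2}\right) - e^2 - 2 (k + 2) (n - k - 2) \Delta^2\right).$$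
   Context: Graphs are finite, undirected, without loops or multiple edges. $d(u)$ denotes the degree of vertex $u$; $\delta$ and $\Delta$ are the minimum and maximum degrees. The first Zagreb index is $Z_1(G)=\sum_{u\in V} d(u)^2$, the forgotten topological index is $F(G)=\sum_{u\in V} d(u)^3$, and the inverse degree is $Inv(G)=\sum_{u\in V}\frac{1}{d(u)}$. A graph is traceable if it has a path containing all its vertices. *)

theory Defs
  imports Main Complex_Main
begin

definition simple_graph :: "'a set \<Rightarrow> ('a \<Rightarrow> 'a \<Rightarrow> bool) \<Rightarrow> bool" where
  "simple_graph V E \<longleftrightarrow> finite V \<and> (\<forall>u v. E u v \<longrightarrow> u \<in> V \<and> v \<in> V)
     \<and> (\<forall>u. \<not> E u u) \<and> (\<forall>u v. E u v \<longrightarrow> E v u)"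

definition deg :: "'a set \<Rightarrow> ('a \<Rightarrow> 'a \<Rightarrow> bool) \<Rightarrow> 'a \<Rightarrow> nat" where
  "deg V E u = card {v \<in> V. E u v}"

definition num_edges :: "'a set \<Rightarrow> ('a \<Rightarrow> 'a \<Rightarrow> bool) \<Rightarrow> nat" where
  "num_edges V E = card {{u, v} | u v. u \<in> V \<and> v \<in> V \<and> E u v}"

definition min_deg :: "'a set \<Rightarrow> ('a \<Rightarrow> 'a \<Rightarrow> bool) \<Rightarrow> nat" where
  "min_deg V E = Min (deg V E ` V)"

definition max_deg :: "'a set \<Rightarrow> ('a \<Rightarrow> 'a \<Rightarrow> bool) \<Rightarrow> nat" where
  "max_deg V E = Max (deg V E ` V)"

definition zagreb1 :: "'a set \<Rightarrow> ('a \<Rightarrow> 'a \<Rightarrow> bool) \<Rightarrow> real" where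
  "zagreb1 V E = (\<Sum>u\<in>V. real (deg V E u) ^ 2)"

definition forgotten_index :: "'a set \<Rightarrow> ('a \<Rightarrow> 'a \<Rightarrow> bool) \<Rightarrow> real" where
  "forgotten_index V E = (\<Sum>u\<in>V. real (deg V E u) ^ 3)"

definition inverse_degree :: "'a set \<Rightarrow> ('a \<Rightarrow> 'a \<Rightarrow> bool) \<Rightarrow> real" where
  "inverse_degree V E = (\<Sum>u\<in>V. 1 / real (deg V E u))"

definition connected_on :: "'a set \<Rightarrow> ('a \<Rightarrow> 'a \<Rightarrow> bool) \<Rightarrow> bool" where
  "connected_on S E \<longleftrightarrow> (\<forall>u\<in>S. \<forall>v\<in>S. (\<lambda>x y. x \<in> S \<and> y \<in> S \<and> E x y)\<^sup>*\<^sup>* u v)"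

definition k_connected :: "'a set \<Rightarrow> ('a \<Rightarrow> 'a \<Rightarrow> bool) \<Rightarrow> nat \<Rightarrow> bool" where
  "k_connected V E k \<longleftrightarrow> card V > k \<and>
     (\<forall>S. S \<subseteq> V \<and> card S < k \<longrightarrow> connected_on (V - S) E)"

definition traceable :: "'a set \<Rightarrow> ('a \<Rightarrow> 'a \<Rightarrow> bool) \<Rightarrow> bool" where
  "traceable V E \<longleftrightarrow> (\<exists>p. distinct p \<and> set p = V \<and>
     (\<forall>i. Suc i < length p \<longrightarrow> E (p ! i) (p ! Suc i)))"

end

theory Submission
  imports Defs
begin

(* Suppose G is not traceable and let P be a longest path, missing some vertex w.  The usual
   exchange arguments for longest paths show that w, the first vertex of P and the successors
   on P of the attachment points of the component of w in G - P are pairwise non-adjacent; by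
   k-connectivity there are at least k attachment points, so this gives an independent set I
   with |I| >= k + 2.
   Counting degrees against I yields  (k + 2) delta <= e <= (n - k - 2) Delta  and
   Z1 <= (n - k - 2) Delta^2 + Delta e,  while always  F >= (n - 1) delta^3 + Delta^3  and
   Inv >= 1/delta + (n - 1)/Delta.  With these, each of the five conditions forces
   Delta = delta and e = (k + 2) delta, so G is regular and bipartite with I as a side and
   |I| = k + 2 <= |V - I|.
   In a connected graph the bipartition is unique, so every vertex off P and both ends of P
   (reverse P) lie in the same side I.  Along P every vertex of V - I is followed by a vertex
   of I and P starts and ends in I, hence |V - I| < |I|: a contradiction. *)

definition is_path :: "'a set \<Rightarrow> ('a \<Rightarrow> 'a \<Rightarrow> bool) \<Rightarrow> 'a list \<Rightarrow> bool" where
  "is_path V E p \<longleftrightarrow> distinct p \<and> set p \<subseteq> V \<and> successively E p"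

definition indep_set :: "('a \<Rightarrow> 'a \<Rightarrow> bool) \<Rightarrow> 'a set \<Rightarrow> bool" where
  "indep_set E I \<longleftrightarrow> (\<forall>x\<in>I. \<forall>y\<in>I. \<not> E x y)"

definition component_in :: "'a set \<Rightarrow> ('a \<Rightarrow> 'a \<Rightarrow> bool) \<Rightarrow> 'a \<Rightarrow> 'a set" where
  "component_in U E w = {x. (\<lambda>x y. x \<in> U \<and> y \<in> U \<and> E x y)\<^sup>*\<^sup>* w x}"

definition edge_set :: "'a set \<Rightarrow> ('a \<Rightarrow> 'a \<Rightarrow> bool) \<Rightarrow> 'a set set" where
  "edge_set V E = {{u, v} | u v. u \<in> V \<and> v \<in> V \<and> E u v}"

section \<open>Paths and components\<close>

lemma last_take_Suc: "i < length xs \<Longrightarrow> last (take (Suc i) xs) = xs ! i"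
  by (simp add: take_Suc_conv_app_nth)

lemma is_path_append:
  "is_path V E (xs @ ys) \<longleftrightarrow> is_path V E xs \<and> is_path V E ys \<and> set xs \<inter> set ys = {}
     \<and> (xs \<noteq> [] \<longrightarrow> ys \<noteq> [] \<longrightarrow> E (last xs) (hd ys))"
  unfolding is_path_def successively_append_iff by auto

lemma is_path_singleton [simp]: "is_path V E [x] \<longleftrightarrow> x \<in> V"
  by (simp add: is_path_def)

lemma is_path_rev:
  assumes "\<And>x y. E x y \<Longrightarrow> E y x" and "is_path V E p"
  shows "is_path V E (rev p)"
proof -
  have "successively (\<lambda>x y. E y x) p"
    using assms by (auto simp: is_path_def intro: successively_mono)
  then show ?thesis using assms(2) by (simp add: is_path_def)
qed

lemma is_path_length_le_card:
  assumes "finite V" "is_path V E p" shows "length p \<le> card V"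
proof -
  have "length p = card (set p)" using assms(2) by (simp add: is_path_def distinct_card)
  also have "\<dots> \<le> card V" using assms by (simp add: is_path_def card_mono)
  finally show ?thesis .
qed

lemma traceable_if_is_path: "is_path V E p \<Longrightarrow> set p = V \<Longrightarrow> traceable V E"
  unfolding traceable_def is_path_def successively_conv_nth by blast

lemma path_from_walk:
  assumes "(\<lambda>x y. x \<in> U \<and> y \<in> U \<and> E x y)\<^sup>*\<^sup>* a b" and "a \<in> U"
  shows "\<exists>q. is_path U E q \<and> q \<noteq> [] \<and> hd q = a \<and> last q = b"
  using assms
proof (induction rule: rtranclp_induct)
  case base
  then show ?case by (intro exI[of _ "[a]"]) auto
next
  case (step b c)
  then obtain q where q: "is_path U E q" "q \<noteq> []" "hd q = a" "last q = b"
    by blast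
  show ?case
  proof (cases "c \<in> set q")
    case True
    then obtain i where i: "i < length q" "q ! i = c" by (auto simp: in_set_conv_nth)
    have "is_path U E (take (Suc i) q)"
      using q(1) is_path_append[of U E "take (Suc i) q" "drop (Suc i) q"] by simp
    moreover have "last (take (Suc i) q) = c" using i by (simp add: last_take_Suc)
    moreover have "hd (take (Suc i) q) = a" using q(3) by (simp add: hd_take)
    ultimately show ?thesis using q(2) by (intro exI[of _ "take (Suc i) q"]) simp
  next
    case False
    have "E (last q) c" "c \<in> U" using q(4) step.hyps(2) by simp_all
    then have "is_path U E (q @ [c])"
      using q(1,2) False unfolding is_path_append by simp
    moreover have "hd (q @ [c]) = a" using q(2,3) by simp
    ultimately show ?thesis by (intro exI[of _ "q @ [c]"]) simp
  qed
qed

lemma self_in_component_in: "w \<in> component_in U E w"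
  by (simp add: component_in_def)

lemma component_in_subset:
  assumes "w \<in> U" shows "component_in U E w \<subseteq> U"
proof
  fix x assume "x \<in> component_in U E w"
  then have "(\<lambda>x y. x \<in> U \<and> y \<in> U \<and> E x y)\<^sup>*\<^sup>* w x" by (simp add: component_in_def)
  then show "x \<in> U"
  proof (induction rule: rtranclp_induct)
    case base
    show ?case using assms .
  qed simp
qed

lemma component_in_step:
  "x \<in> component_in U E w \<Longrightarrow> x \<in> U \<Longrightarrow> y \<in> U \<Longrightarrow> E x y \<Longrightarrow> y \<in> component_in U E w"
  unfolding component_in_def by (auto intro: rtranclp.rtrancl_into_rtrancl)

lemma component_in_path:
  assumes sym: "\<And>x y. E x y \<Longrightarrow> E y x" and "w \<in> U"
    and "x \<in> component_in U E w" "y \<in> component_in U E w"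
  shows "\<exists>q. is_path U E q \<and> q \<noteq> [] \<and> hd q = x \<and> last q = y"
proof -
  let ?R = "\<lambda>x y. x \<in> U \<and> y \<in> U \<and> E x y"
  have "symp ?R" by (rule sympI) (use sym in blast)
  moreover have "?R\<^sup>*\<^sup>* w x" using assms(3) by (simp add: component_in_def)
  ultimately have "?R\<^sup>*\<^sup>* x w" by (rule sympD[OF symp_rtranclp])
  moreover have "?R\<^sup>*\<^sup>* w y" using assms(4) by (simp add: component_in_def)
  ultimately have "?R\<^sup>*\<^sup>* x y" by (rule rtranclp_trans)
  moreover have "x \<in> U" using component_in_subset[OF assms(2)] assms(3) by (rule subsetD)
  ultimately show ?thesis by (rule path_from_walk)
qed

lemma connected_on_closed_subset:
  assumes "connected_on U E" "w \<in> U" "w \<in> C"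
    and closed: "\<And>x y. x \<in> U \<Longrightarrow> x \<in> C \<Longrightarrow> y \<in> U \<Longrightarrow> E x y \<Longrightarrow> y \<in> C"
  shows "U \<subseteq> C"
proof
  fix y assume "y \<in> U"
  then have "(\<lambda>x y. x \<in> U \<and> y \<in> U \<and> E x y)\<^sup>*\<^sup>* w y"
    using assms(1,2) by (simp add: connected_on_def)
  then show "y \<in> C"
  proof (induction rule: rtranclp_induct)
    case base
    show ?case by (rule assms(3))
  next
    case (step x y)
    then show ?case using closed by blast
  qed
qed

lemma k_connected_imp_connected_on:
  assumes "k_connected V E k" "1 \<le> k" shows "connected_on V E"
proof -
  have "{} \<subseteq> V" "card {} < k" using assms(2) by simp_all
  then have "connected_on (V - {}) E" using assms(1) unfolding k_connected_def by blast
  then show ?thesis by simp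
qed

lemma indep_set_bipartition_edge:
  assumes "indep_set E I" "indep_set E (V - I)" "y \<in> V" "z \<in> V" "E y z"
  shows "z \<in> I \<longleftrightarrow> y \<notin> I"
  using assms unfolding indep_set_def by (metis Diff_iff)

lemma filter_count_alternating:
  assumes "successively (\<lambda>x y. x \<notin> I \<longrightarrow> y \<in> I) xs" "xs \<noteq> []" "last xs \<in> I"
  shows "length (filter (\<lambda>x. x \<notin> I) xs) + (if hd xs \<in> I then 1 else 0)
           \<le> length (filter (\<lambda>x. x \<in> I) xs)"
  using assms
proof (induction xs)
  case Nil
  then show ?case by simp
next
  case (Cons x xs)
  show ?case
  proof (cases "xs = []")
    case True
    then show ?thesis using Cons.prems by simp
  next
    case False
    then have "successively (\<lambda>x y. x \<notin> I \<longrightarrow> y \<in> I) xs" "x \<notin> I \<longrightarrow> hd xs \<in> I"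
      using Cons.prems(1) by (auto simp: successively_Cons neq_Nil_conv)
    moreover have "last xs \<in> I" using Cons.prems(3) False by simp
    ultimately show ?thesis using Cons.IH False by (auto split: if_splits)
  qed
qed

section \<open>The degree conditions\<close>

definition index_condition ::
    "real \<Rightarrow> real \<Rightarrow> real \<Rightarrow> real \<Rightarrow> real \<Rightarrow> real \<Rightarrow> real \<Rightarrow> real \<Rightarrow> bool" where
  "index_condition n kk e \<delta> \<Delta> Z F Inv \<longleftrightarrow>
     Z \<ge> (n - kk - 2) * \<Delta>^2 + e^2 / (2 * (kk + 2)) + (kk + 2) * \<Delta>^3 / (2 * \<delta>)
     \<or> F \<le> (n - kk - 2) * \<delta>^3 + \<delta> * (2 * (kk + 2)^2 * \<delta>^2 - e^2) / (kk + 2)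
     \<or> F \<le> (n - kk - 2) * \<delta>^3 + \<delta> / (kk + 2) *
          (2 * (kk + 2) * ((kk + 2) * \<delta>^2 + e^2 / (n - kk - 2)) - e^2 - 2 * (kk + 2) * (n - kk - 2) * \<Delta>^2)
     \<or> Inv \<le> (n - kk - 2) / \<Delta> + (2 * (kk + 2)^2 * \<delta>^2 - e^2) / ((kk + 2) * \<Delta>^3)
     \<or> Inv \<le> (n - kk - 2) / \<Delta> + 1 / ((kk + 2) * \<Delta>^3) *
          (2 * (kk + 2) * ((kk + 2) * \<delta>^2 + e^2 / (n - kk - 2)) - e^2 - 2 * (kk + 2) * (n - kk - 2) * \<Delta>^2)"

lemma zagreb_bound_forces_regular:
  fixes M N e d D Z :: real
  assumes N: "N > 0" and d: "0 < d" "d \<le> D"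
    and upper: "Z \<le> M * D^2 + D * e"
    and lower: "Z \<ge> M * D^2 + e^2 / (2 * N) + N * D^3 / (2 * d)"
  shows "D = d \<and> e = N * d"
proof -
  have D: "D > 0" using d by simp
  have h: "e^2 / (2 * N) + N * D^3 / (2 * d) \<le> D * e" using upper lower by simp
  have "N * D^2 \<le> N * (D^3 / d)"
    using d D N by (intro mult_left_mono) (simp_all add: field_simps power2_eq_square power3_eq_cube)
  then have "e^2 / (2 * N) + N * D^2 / 2 \<le> D * e" using h by simp
  then have "(e - N * D)^2 \<le> 0" using N by (simp add: field_simps power2_eq_square)
  then have eND: "e = N * D" by simp
  then have "N * D^3 / (2 * d) \<le> N * D^2 / 2" using h N by (simp add: power2_eq_square field_simps)
  then have "D^3 \<le> D^2 * d" using N d by (simp add: field_simps)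
  then have "D \<le> d" using D by (simp add: power2_eq_square power3_eq_cube)
  then show ?thesis using d eND by simp
qed

lemma forgotten_bound_forces_regular:
  fixes M N e d D F :: real
  assumes N: "N > 0" and d: "0 < d" "d \<le> D" and e: "N * d \<le> e"
    and lower: "F \<ge> (M + N - 1) * d^3 + D^3"
    and upper: "F \<le> M * d^3 + d * (2 * N^2 * d^2 - e^2) / N"
  shows "D = d \<and> e = N * d"
proof -
  have e2: "(N * d)^2 \<le> e^2" using e N d by (intro power_mono) auto
  have "d * (2 * N^2 * d^2 - e^2) / N \<le> d * (N^2 * d^2) / N"
    using e2 N d by (intro divide_right_mono mult_left_mono) (auto simp: power_mult_distrib)
  also have "\<dots> = N * d^3" using N by (simp add: power2_eq_square power3_eq_cube)
  finally have "D^3 \<le> d^3" using lower upper by (simp add: algebra_simps)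
  moreover have "d < D \<Longrightarrow> d^3 < D^3" using d by (intro power_strict_mono) auto
  ultimately have Dd: "D = d" using d by fastforce
  have "N * d^3 \<le> d * (2 * N^2 * d^2 - e^2) / N" using lower upper Dd by (simp add: algebra_simps)
  then have "N * (N * d^3) \<le> d * (2 * N^2 * d^2 - e^2)" using N by (simp add: field_simps)
  then have "d * e^2 \<le> d * (N * d)^2" by (simp add: algebra_simps power2_eq_square power3_eq_cube)
  then have "e^2 \<le> (N * d)^2" using d(1) by (rule mult_left_le_imp_le)
  then have "e \<le> N * d" by (rule power2_le_imp_le) (use N d in simp)
  then show ?thesis using Dd e by auto
qed

lemma inverse_degree_bound_forces_regular:
  fixes M N e d D Inv :: real
  assumes N: "N > 0" and d: "0 < d" "d \<le> D" and e: "N * d \<le> e"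
    and lower: "Inv \<ge> 1 / d + (M + N - 1) / D"
    and upper: "Inv \<le> M / D + (2 * N^2 * d^2 - e^2) / (N * D^3)"
  shows "D = d \<and> e = N * d"
proof -
  have D: "D > 0" using d by simp
  have "1 / D \<le> 1 / d" using d by (simp add: frac_le)
  then have "(M + N) / D \<le> Inv" using lower by (simp add: diff_divide_distrib add_divide_distrib)
  then have "N / D \<le> (2 * N^2 * d^2 - e^2) / (N * D^3)" using upper by (simp add: add_divide_distrib)
  then have "N * (N * D^2) \<le> 2 * N^2 * d^2 - e^2"
    using N D by (simp add: field_simps power2_eq_square power3_eq_cube)
  moreover have e2: "(N * d)^2 \<le> e^2" using e N d by (intro power_mono) auto
  ultimately have sq: "(N * D)^2 + e^2 \<le> 2 * (N * d)^2"
    by (simp add: power_mult_distrib power2_eq_square algebra_simps)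
  have "(N * d)^2 \<le> (N * D)^2" using N d by (intro power_mono) auto
  then have "(N * D)^2 \<le> (N * d)^2" "e^2 \<le> (N * d)^2" using sq e2 by linarith+
  then have "N * D \<le> N * d" "e \<le> N * d" using N d by (auto intro: power2_le_imp_le)
  then show ?thesis using N d e by simp
qed

lemma index_condition_forces_regular:
  fixes n kk e d D Z F Inv :: real
  assumes kk: "kk \<ge> 0" and d: "0 < d" "d \<le> D"
    and e_lower: "(kk + 2) * d \<le> e" and e_upper: "e \<le> (n - kk - 2) * D"
    and Z: "Z \<le> (n - kk - 2) * D^2 + D * e"
    and F: "F \<ge> (n - 1) * d^3 + D^3" and Inv: "Inv \<ge> 1 / d + (n - 1) / D"
    and cond: "index_condition n kk e d D Z F Inv"
  shows "D = d \<and> e = (kk + 2) * d"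
proof -
  define N where "N = kk + 2"
  define M where "M = n - kk - 2"
  have N: "N > 0" using kk by (simp add: N_def)
  have n: "n - 1 = M + N - 1" by (simp add: M_def N_def)
  have eN: "N * d \<le> e" and eM: "e \<le> M * D" using e_lower e_upper by (simp_all add: N_def M_def)
  have "0 < N * d" using N d by simp
  then have e: "0 < e" using eN by linarith
  then have "0 < M * D" using eM by linarith
  then have M: "M > 0" using d by (simp add: zero_less_mult_iff)
  have "e^2 \<le> (M * D)^2" using eM e by (intro power_mono) simp_all
  then have "e^2 / M \<le> M * D^2" using M by (simp add: field_simps power2_eq_square)
  \<comment> \<open>Conditions [3] and [5] are [2] and [4] plus a term that is nonpositive because e \<le> M \<Delta>.\<close>
  then have "2 * d * (e^2 / M - M * D^2) \<le> 0" "2 * (e^2 / M - M * D^2) / D^3 \<le> 0"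
    using d by (simp_all add: mult_nonneg_nonpos divide_nonpos_pos)
  moreover have "M * d^3 + d / N * (2 * N * (N * d^2 + e^2 / M) - e^2 - 2 * N * M * D^2)
      = M * d^3 + d * (2 * N^2 * d^2 - e^2) / N + 2 * d * (e^2 / M - M * D^2)"
    using N by (simp add: field_simps power2_eq_square)
  moreover have "M / D + 1 / (N * D^3) * (2 * N * (N * d^2 + e^2 / M) - e^2 - 2 * N * M * D^2)
      = M / D + (2 * N^2 * d^2 - e^2) / (N * D^3) + 2 * (e^2 / M - M * D^2) / D^3"
    using N d by (simp add: field_simps power2_eq_square)
  moreover note cond[unfolded index_condition_def N_def[symmetric] M_def[symmetric]]
  ultimately consider
      "Z \<ge> M * D^2 + e^2 / (2 * N) + N * D^3 / (2 * d)"
    | "F \<le> M * d^3 + d * (2 * N^2 * d^2 - e^2) / N"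
    | "Inv \<le> M / D + (2 * N^2 * d^2 - e^2) / (N * D^3)"
    by linarith
  then have "D = d \<and> e = N * d"
  proof cases
    case 1
    have "Z \<le> M * D^2 + D * e" using Z by (simp add: M_def)
    with N d show ?thesis using 1 by (rule zagreb_bound_forces_regular)
  next
    case 2
    have "F \<ge> (M + N - 1) * d^3 + D^3" using F by (simp add: n[symmetric])
    with N d eN show ?thesis using 2 by (rule forgotten_bound_forces_regular)
  next
    case 3
    have "Inv \<ge> 1 / d + (M + N - 1) / D" using Inv by (simp add: n[symmetric])
    with N d eN show ?thesis using 3 by (rule inverse_degree_bound_forces_regular)
  qed
  then show ?thesis by (simp add: N_def)
qed

lemma sum_ge_term_plus_bound:
  fixes f :: "'b \<Rightarrow> real"
  assumes "finite A" "a \<in> A" "\<And>x. x \<in> A \<Longrightarrow> c \<le> f x"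
  shows "f a + (real (card A) - 1) * c \<le> sum f A"
proof -
  have "1 \<le> card A" using assms(1,2) card_0_eq by fastforce
  then have "(real (card A) - 1) * c = (\<Sum>x\<in>A - {a}. c)"
    using assms(1,2) by (simp add: of_nat_diff)
  also have "\<dots> \<le> (\<Sum>x\<in>A - {a}. f x)" using assms(3) by (intro sum_mono) auto
  finally show ?thesis using sum.remove[OF assms(1,2), of f] by simp
qed

locale sgraph =
  fixes V :: "'a set" and E :: "'a \<Rightarrow> 'a \<Rightarrow> bool"
  assumes simple: "simple_graph V E"
begin

lemma finite_V: "finite V"
  using simple by (simp add: simple_graph_def)

lemma edge_sym: "E x y \<Longrightarrow> E y x"
  using simple by (simp add: simple_graph_def)

lemma edge_in_V: "E x y \<Longrightarrow> x \<in> V" "E x y \<Longrightarrow> y \<in> V"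
  using simple by (simp_all add: simple_graph_def)

lemma no_loop: "\<not> E x x"
  using simple by (simp add: simple_graph_def)

lemma rev_path: "is_path V E p \<Longrightarrow> is_path V E (rev p)"
  using edge_sym by (rule is_path_rev)

lemma longest_path_exists:
  assumes "V \<noteq> {}"
  shows "\<exists>P. is_path V E P \<and> P \<noteq> [] \<and> (\<forall>q. is_path V E q \<longrightarrow> length q \<le> length P)"
proof -
  obtain u where "u \<in> V" using assms by blast
  then have "is_path V E [u]" by simp
  moreover have "\<forall>q. is_path V E q \<longrightarrow> length q < Suc (card V)"
    using is_path_length_le_card[OF finite_V] by (simp add: less_Suc_eq_le)
  ultimately obtain P where "is_path V E P" "\<forall>q. is_path V E q \<longrightarrow> length q \<le> length P"
    using ex_has_greatest_nat[of "is_path V E" "[u]" length "Suc (card V)"] by blast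
  moreover have "P \<noteq> []" using calculation(2) \<open>is_path V E [u]\<close> by fastforce
  ultimately show ?thesis by blast
qed

lemma bipartition_side_unique:
  assumes "connected_on V E"
    and I1: "I1 \<subseteq> V" "indep_set E I1" "indep_set E (V - I1)"
    and I2: "I2 \<subseteq> V" "indep_set E I2" "indep_set E (V - I2)"
    and "x \<in> I1" "x \<in> I2"
  shows "I1 = I2"
proof -
  have "V \<subseteq> {y. y \<in> I1 \<longleftrightarrow> y \<in> I2}"
  proof (rule connected_on_closed_subset[OF assms(1)])
    show "x \<in> V" "x \<in> {y. y \<in> I1 \<longleftrightarrow> y \<in> I2}" using assms(8,9) I1(1) by auto
  next
    fix y z assume "y \<in> V" "y \<in> {y. y \<in> I1 \<longleftrightarrow> y \<in> I2}" "z \<in> V" "E y z"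
    moreover have "z \<in> I1 \<longleftrightarrow> y \<notin> I1"
      using I1(2,3) \<open>y \<in> V\<close> \<open>z \<in> V\<close> \<open>E y z\<close> by (rule indep_set_bipartition_edge)
    moreover have "z \<in> I2 \<longleftrightarrow> y \<notin> I2"
      using I2(2,3) \<open>y \<in> V\<close> \<open>z \<in> V\<close> \<open>E y z\<close> by (rule indep_set_bipartition_edge)
    ultimately show "z \<in> {y. y \<in> I1 \<longleftrightarrow> y \<in> I2}" by simp
  qed
  then show ?thesis using I1(1) I2(1) by blast
qed

lemma path_alternation_card:
  assumes p: "is_path V E p" "p \<noteq> []" and I: "indep_set E (V - I)" "hd p \<in> I" "last p \<in> I"
  shows "card (set p - I) < card (set p \<inter> I)"
proof -
  have "successively E p" "set p \<subseteq> V" "distinct p" using p(1) by (auto simp: is_path_def)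
  then have "successively (\<lambda>x y. x \<notin> I \<longrightarrow> y \<in> I) p"
    using I(1) unfolding indep_set_def by (blast intro: successively_mono)
  then have "length (filter (\<lambda>x. x \<notin> I) p) < length (filter (\<lambda>x. x \<in> I) p)"
    using filter_count_alternating[of I p] p(2) I(2,3) by simp
  moreover have "card (set p - I) = length (filter (\<lambda>x. x \<notin> I) p)"
    using \<open>distinct p\<close> distinct_card[of "filter (\<lambda>x. x \<notin> I) p"] by (simp add: set_diff_eq)
  moreover have "card (set p \<inter> I) = length (filter (\<lambda>x. x \<in> I) p)"
    using \<open>distinct p\<close> distinct_card[of "filter (\<lambda>x. x \<in> I) p"] by (simp add: Int_def)
  ultimately show ?thesis by simp
qed

lemma deg_pos:
  assumes "connected_on V E" "2 \<le> card V" "u \<in> V"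
  shows "0 < deg V E u"
proof (rule ccontr)
  assume "\<not> 0 < deg V E u"
  then have "{v \<in> V. E u v} = {}" using finite_V by (simp add: deg_def)
  then have "V \<subseteq> {u}" using connected_on_closed_subset[OF assms(1,3), of "{u}"] by blast
  then have "card V \<le> 1" using card_mono[of "{u}" V] by simp
  then show False using assms(2) by simp
qed

lemma min_deg_le_deg: "u \<in> V \<Longrightarrow> min_deg V E \<le> deg V E u"
  using finite_V by (simp add: min_deg_def)

lemma deg_le_max_deg: "u \<in> V \<Longrightarrow> deg V E u \<le> max_deg V E"
  using finite_V by (simp add: max_deg_def)

lemma min_deg_attained:
  assumes "V \<noteq> {}" shows "\<exists>u\<in>V. deg V E u = min_deg V E"
proof -
  have "Min (deg V E ` V) \<in> deg V E ` V" using finite_V assms by (intro Min_in) auto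
  then show ?thesis by (auto simp: min_deg_def)
qed

lemma max_deg_attained:
  assumes "V \<noteq> {}" shows "\<exists>u\<in>V. deg V E u = max_deg V E"
proof -
  have "Max (deg V E ` V) \<in> deg V E ` V" using finite_V assms by (intro Max_in) auto
  then show ?thesis by (auto simp: max_deg_def)
qed

lemma min_deg_pos: "connected_on V E \<Longrightarrow> 2 \<le> card V \<Longrightarrow> 0 < min_deg V E"
  using min_deg_attained deg_pos by fastforce

definition darts_from :: "'a set \<Rightarrow> ('a \<times> 'a) set" where
  "darts_from A = (SIGMA u:A. {v \<in> V. E u v})"

lemma sum_deg_eq_card_darts_from:
  assumes "A \<subseteq> V" shows "(\<Sum>u\<in>A. deg V E u) = card (darts_from A)"
proof -
  have "finite A" using finite_V assms by (rule finite_subset[rotated])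
  then show ?thesis by (simp add: darts_from_def deg_def card_SigmaI finite_V)
qed

lemma finite_darts_from: "A \<subseteq> V \<Longrightarrow> finite (darts_from A)"
  using finite_V by (auto simp: darts_from_def intro: finite_subset)

lemma finite_edge_set: "finite (edge_set V E)"
  by (rule finite_subset[of _ "Pow V"]) (auto simp: edge_set_def finite_V)

lemma num_edges_eq_card_edge_set: "num_edges V E = card (edge_set V E)"
  by (simp add: num_edges_def edge_set_def)

lemma edges_of_darts_subset: "(\<lambda>(u, v). {u, v}) ` darts_from A \<subseteq> edge_set V E"
proof
  fix x assume "x \<in> (\<lambda>(u, v). {u, v}) ` darts_from A"
  then obtain u v where "x = {u, v}" "v \<in> V" "E u v" by (auto simp: darts_from_def)
  then show "x \<in> edge_set V E" using edge_in_V(1) unfolding edge_set_def by blast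
qed

lemma inj_on_darts_from_indep:
  assumes "indep_set E I" shows "inj_on (\<lambda>(u, v). {u, v}) (darts_from I)"
proof (rule inj_onI, clarify)
  fix u v u' v' assume "(u, v) \<in> darts_from I" "(u', v') \<in> darts_from I" "{u, v} = {u', v'}"
  then have "u \<in> I" "u' \<in> I" "E u v" "u = u' \<and> v = v' \<or> u = v' \<and> v = u'"
    by (auto simp: darts_from_def doubleton_eq_iff)
  then show "u = u' \<and> v = v'" using assms unfolding indep_set_def by blast
qed

lemma edge_set_subset_darts_from_compl:
  assumes "indep_set E I" shows "edge_set V E \<subseteq> (\<lambda>(u, v). {u, v}) ` darts_from (V - I)"
proof
  fix e assume "e \<in> edge_set V E"
  then obtain u v where e: "e = {u, v}" "u \<in> V" "v \<in> V" "E u v" by (auto simp: edge_set_def)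
  show "e \<in> (\<lambda>(u, v). {u, v}) ` darts_from (V - I)"
  proof (cases "u \<in> I")
    case True
    then have "(v, u) \<in> darts_from (V - I)"
      using assms e edge_sym[OF e(4)] unfolding indep_set_def darts_from_def by blast
    then show ?thesis using e(1) by (auto intro!: image_eqI[of _ _ "(v, u)"])
  next
    case False
    then have "(u, v) \<in> darts_from (V - I)" using e by (simp add: darts_from_def)
    then show ?thesis using e(1) by (auto intro!: image_eqI[of _ _ "(u, v)"])
  qed
qed

lemma sum_deg_indep_le_num_edges:
  assumes "I \<subseteq> V" "indep_set E I"
  shows "(\<Sum>u\<in>I. deg V E u) \<le> num_edges V E"
proof -
  have "(\<Sum>u\<in>I. deg V E u) = card ((\<lambda>(u, v). {u, v}) ` darts_from I)"
    using sum_deg_eq_card_darts_from[OF assms(1)] card_image[OF inj_on_darts_from_indep[OF assms(2)]]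
    by simp
  also have "\<dots> \<le> num_edges V E"
    unfolding num_edges_eq_card_edge_set by (rule card_mono[OF finite_edge_set edges_of_darts_subset])
  finally show ?thesis .
qed

lemma indep_compl_if_sum_deg_eq_num_edges:
  assumes "I \<subseteq> V" "indep_set E I" and sum_eq: "(\<Sum>u\<in>I. deg V E u) = num_edges V E"
  shows "indep_set E (V - I)"
proof (rule ccontr)
  assume "\<not> indep_set E (V - I)"
  then obtain x y where xy: "x \<in> V - I" "y \<in> V - I" "E x y" by (auto simp: indep_set_def)
  have "{x, y} \<in> edge_set V E" using xy by (auto simp: edge_set_def)
  moreover have "{x, y} \<notin> (\<lambda>(u, v). {u, v}) ` darts_from I"
    using xy by (auto simp: darts_from_def doubleton_eq_iff)
  ultimately have "(\<lambda>(u, v). {u, v}) ` darts_from I \<subset> edge_set V E"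
    using edges_of_darts_subset by blast
  then have "card ((\<lambda>(u, v). {u, v}) ` darts_from I) < num_edges V E"
    unfolding num_edges_eq_card_edge_set by (rule psubset_card_mono[OF finite_edge_set])
  then show False
    using sum_eq sum_deg_eq_card_darts_from[OF assms(1)] card_image[OF inj_on_darts_from_indep[OF assms(2)]]
    by simp
qed

lemma num_edges_le_sum_deg_compl:
  assumes "indep_set E I"
  shows "num_edges V E \<le> (\<Sum>u\<in>V - I. deg V E u)"
proof -
  have "num_edges V E \<le> card ((\<lambda>(u, v). {u, v}) ` darts_from (V - I))"
    unfolding num_edges_eq_card_edge_set
    by (rule card_mono[OF _ edge_set_subset_darts_from_compl[OF assms]]) (simp add: finite_darts_from)
  also have "\<dots> \<le> card (darts_from (V - I))"
    by (rule card_image_le) (simp add: finite_darts_from)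
  also have "\<dots> = (\<Sum>u\<in>V - I. deg V E u)"
    by (simp add: sum_deg_eq_card_darts_from)
  finally show ?thesis .
qed

lemma forgotten_index_ge:
  assumes "V \<noteq> {}"
  shows "(real (card V) - 1) * real (min_deg V E)^3 + real (max_deg V E)^3 \<le> forgotten_index V E"
proof -
  obtain u where "u \<in> V" "deg V E u = max_deg V E" using max_deg_attained[OF assms] by blast
  moreover have "real (min_deg V E)^3 \<le> real (deg V E x)^3" if "x \<in> V" for x
    using min_deg_le_deg[OF that] by (simp add: power_mono)
  ultimately show ?thesis
    using sum_ge_term_plus_bound[OF finite_V, of u "real (min_deg V E)^3" "\<lambda>x. real (deg V E x)^3"]
    by (simp add: forgotten_index_def add.commute)
qed

lemma inverse_degree_ge:
  assumes "V \<noteq> {}" "0 < min_deg V E"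
  shows "1 / real (min_deg V E) + (real (card V) - 1) / real (max_deg V E) \<le> inverse_degree V E"
proof -
  obtain u where "u \<in> V" "deg V E u = min_deg V E" using min_deg_attained[OF assms(1)] by blast
  moreover have "1 / real (max_deg V E) \<le> 1 / real (deg V E x)" if "x \<in> V" for x
    using deg_le_max_deg[OF that] min_deg_le_deg[OF that] assms(2) by (simp add: frac_le)
  ultimately show ?thesis
    using sum_ge_term_plus_bound[OF finite_V, of u "1 / real (max_deg V E)" "\<lambda>x. 1 / real (deg V E x)"]
    by (simp add: inverse_degree_def)
qed

lemma zagreb1_le:
  assumes "I \<subseteq> V"
  shows "zagreb1 V E \<le> real (card (V - I)) * real (max_deg V E)^2
           + real (max_deg V E) * (\<Sum>u\<in>I. real (deg V E u))"
proof -
  let ?D = "real (max_deg V E)"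
  have "zagreb1 V E = (\<Sum>u\<in>V - I. real (deg V E u)^2) + (\<Sum>u\<in>I. real (deg V E u)^2)"
    unfolding zagreb1_def using sum.subset_diff[OF assms finite_V] by simp
  also have "(\<Sum>u\<in>V - I. real (deg V E u)^2) \<le> (\<Sum>u\<in>V - I. ?D^2)"
    using deg_le_max_deg by (intro sum_mono power_mono) auto
  also have "(\<Sum>u\<in>I. real (deg V E u)^2) \<le> (\<Sum>u\<in>I. ?D * real (deg V E u))"
    using deg_le_max_deg assms by (intro sum_mono) (auto simp: power2_eq_square intro!: mult_right_mono)
  finally show ?thesis by (simp add: sum_distrib_left)
qed

lemma index_condition_forces_regular_graph:
  assumes d: "0 < min_deg V E" and I: "I \<subseteq> V" "indep_set E I" "k + 2 \<le> card I"
    and cond: "index_condition (real (card V)) (real k) (real (num_edges V E)) (real (min_deg V E))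
           (real (max_deg V E)) (zagreb1 V E) (forgotten_index V E) (inverse_degree V E)"
  shows "max_deg V E = min_deg V E \<and> num_edges V E = (k + 2) * min_deg V E"
proof -
  let ?n = "real (card V)" and ?d = "real (min_deg V E)" and ?D = "real (max_deg V E)"
    and ?e = "real (num_edges V E)" and ?s = "real (card I)" and ?\<sigma> = "\<Sum>u\<in>I. real (deg V E u)"
  have V: "V \<noteq> {}" using I(1,3) by auto
  have card_compl: "real (card (V - I)) = ?n - ?s"
    using I(1) finite_V by (simp add: card_Diff_subset of_nat_diff card_mono finite_subset)
  have s: "real k + 2 \<le> ?s" using I(3) by simp
  have dD: "?d \<le> ?D"
    using V min_deg_le_deg deg_le_max_deg by (meson all_not_in_conv of_nat_le_iff order_trans)
  have "(real k + 2) * ?d \<le> ?s * ?d" using s by (intro mult_right_mono) auto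
  also have "?s * ?d \<le> ?\<sigma>"
    using sum_mono[of I "\<lambda>_. ?d" "\<lambda>u. real (deg V E u)"] min_deg_le_deg I(1) by auto
  also have \<sigma>e: "?\<sigma> \<le> ?e"
    using sum_deg_indep_le_num_edges[OF I(1,2)] by (simp flip: of_nat_sum)
  finally have e_lower: "(real k + 2) * ?d \<le> ?e" .
  have "?e \<le> (\<Sum>u\<in>V - I. real (deg V E u))"
    using num_edges_le_sum_deg_compl[OF I(2)] by (simp flip: of_nat_sum)
  also have "\<dots> \<le> (\<Sum>u\<in>V - I. ?D)" using deg_le_max_deg by (intro sum_mono) auto
  also have "\<dots> = (?n - ?s) * ?D" using card_compl by simp
  also have "\<dots> \<le> (?n - real k - 2) * ?D" using s by (intro mult_right_mono) auto
  finally have e_upper: "?e \<le> (?n - real k - 2) * ?D" .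
  have "zagreb1 V E \<le> (?n - ?s) * ?D^2 + ?D * ?\<sigma>" using zagreb1_le[OF I(1)] card_compl by simp
  also have "\<dots> \<le> (?n - real k - 2) * ?D^2 + ?D * ?e"
    using s \<sigma>e by (intro add_mono mult_right_mono mult_left_mono) auto
  finally have "?D = ?d \<and> ?e = (real k + 2) * ?d"
    using index_condition_forces_regular[OF _ _ dD e_lower e_upper _ _ _ cond] d
      forgotten_index_ge[OF V] inverse_degree_ge[OF V d]
    by (simp add: mult.commute)
  then show ?thesis by (metis of_nat_eq_iff of_nat_mult of_nat_add of_nat_numeral)
qed

lemma regular_indep_set_bipartition:
  assumes reg: "max_deg V E = min_deg V E" and e: "num_edges V E = (k + 2) * min_deg V E"
    and d: "0 < min_deg V E" and I: "I \<subseteq> V" "indep_set E I" "k + 2 \<le> card I"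
  shows "indep_set E (V - I) \<and> card I \<le> card (V - I)"
proof -
  have deg: "deg V E u = min_deg V E" if "u \<in> V" for u
    using min_deg_le_deg[OF that] deg_le_max_deg[OF that] reg by simp
  have sum_I: "(\<Sum>u\<in>I. deg V E u) = card I * min_deg V E" using deg I(1) by (simp add: subset_iff)
  then have "card I * min_deg V E \<le> (k + 2) * min_deg V E"
    using sum_deg_indep_le_num_edges[OF I(1,2)] e by simp
  then have "card I \<le> k + 2" using d by (simp only: mult_le_cancel2)
  then have card_I: "card I = k + 2" using I(3) by simp
  then have "indep_set E (V - I)"
    using indep_compl_if_sum_deg_eq_num_edges[OF I(1,2)] sum_I e by simp
  moreover have "(k + 2) * min_deg V E \<le> card (V - I) * min_deg V E"
    using num_edges_le_sum_deg_compl[OF I(2)] e deg by simp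
  then have "k + 2 \<le> card (V - I)" using d by (simp only: mult_le_cancel2)
  ultimately show ?thesis using card_I by simp
qed

end

section \<open>Longest paths\<close>

locale longest_path = sgraph +
  fixes P :: "'a list"
  assumes path: "is_path V E P" and nonempty: "P \<noteq> []"
    and longest: "is_path V E q \<Longrightarrow> length q \<le> length P"
begin

lemma longest_path_rev: "longest_path V E (rev P)"
  using path nonempty longest by unfold_locales (simp_all add: rev_path)

lemma path_take_drop:
  "is_path V E (take i P)" "is_path V E (drop i P)" "set (take i P) \<inter> set (drop i P) = {}"
  using path is_path_append[of V E "take i P" "drop i P"] by simp_all

lemma outside_path_disjoint:
  "is_path (V - set P) E q \<Longrightarrow> is_path V E q \<and> set q \<inter> set P = {}"
  by (auto simp: is_path_def)

lemma no_outside_nbr_hd: "h \<in> V - set P \<Longrightarrow> \<not> E h (hd P)"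
proof
  assume "h \<in> V - set P" "E h (hd P)"
  then have "is_path V E ([h] @ P)" using path nonempty unfolding is_path_append by simp
  then show False using longest by fastforce
qed

lemma no_outside_nbr_last: "h \<in> V - set P \<Longrightarrow> \<not> E (last P) h"
proof
  assume "h \<in> V - set P" "E (last P) h"
  then have "is_path V E (P @ [h])" using path nonempty unfolding is_path_append by simp
  then show False using longest by fastforce
qed

lemma no_detour:
  assumes q: "is_path (V - set P) E q" "q \<noteq> []" and i: "Suc i < length P"
    and "E (P ! i) (hd q)"
  shows "\<not> E (last q) (P ! Suc i)"
proof
  assume "E (last q) (P ! Suc i)"
  define A where "A = take (Suc i) P"
  define C where "C = drop (Suc i) P"
  have "set A \<subseteq> set P" "set C \<subseteq> set P" by (simp_all add: A_def C_def set_take_subset set_drop_subset)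
  moreover have "last A = P ! i" "hd C = P ! Suc i"
    using i by (simp_all add: A_def C_def last_take_Suc hd_drop_conv_nth)
  moreover note path_take_drop[of "Suc i"] outside_path_disjoint[OF q(1)]
  ultimately have "is_path V E (A @ q @ C)"
    using q(2) i assms(4) \<open>E (last q) (P ! Suc i)\<close>
    by (auto simp: is_path_append A_def[symmetric] C_def[symmetric])
  moreover have "length (A @ q @ C) > length P" using q(2) i by (simp add: A_def C_def)
  ultimately show False using longest by fastforce
qed

lemma no_rotation:
  assumes h: "h \<in> V - set P" and j: "Suc j < length P" and "E (P ! j) h"
  shows "\<not> E (P ! 0) (P ! Suc j)"
proof
  assume "E (P ! 0) (P ! Suc j)"
  define A where "A = take (Suc j) P"
  define C where "C = drop (Suc j) P"
  have "set A \<subseteq> set P" "set C \<subseteq> set P" by (simp_all add: A_def C_def set_take_subset set_drop_subset)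
  moreover have "hd (rev A) = P ! j" "last (rev A) = P ! 0" "hd C = P ! Suc j" "A \<noteq> []"
    using j nonempty
    by (simp_all add: A_def C_def hd_rev last_rev last_take_Suc hd_drop_conv_nth hd_conv_nth)
  moreover have "is_path V E (rev A)"
    using path_take_drop(1) by (simp add: A_def rev_path)
  moreover note path_take_drop[of "Suc j"]
  moreover have "E h (P ! j)" using assms(3) by (rule edge_sym)
  ultimately have "is_path V E ([h] @ rev A @ C)"
    using h \<open>E (P ! 0) (P ! Suc j)\<close> unfolding is_path_append
    by (auto simp: A_def[symmetric] C_def[symmetric])
  moreover have "length ([h] @ rev A @ C) > length P" using j by (simp add: A_def C_def)
  ultimately show False using longest by fastforce
qed

lemma no_crossing:
  assumes q: "is_path (V - set P) E q" "q \<noteq> []" and ij: "i < j" "Suc j < length P"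
    and "E (P ! i) (hd q)" "E (last q) (P ! j)"
  shows "\<not> E (P ! Suc i) (P ! Suc j)"
proof
  assume "E (P ! Suc i) (P ! Suc j)"
  define A where "A = take (Suc i) P"
  define B where "B = drop (Suc i) (take (Suc j) P)"
  define C where "C = drop (Suc j) P"
  have P_eq: "P = A @ B @ C"
    unfolding A_def B_def C_def using ij
    by (metis Suc_le_mono append.assoc append_take_drop_id less_imp_le min.absorb1 take_take)
  then have "is_path V E (A @ B @ C)" using path by simp
  then have paths: "is_path V E A" "is_path V E B" "is_path V E C"
    and disjoint: "set A \<inter> set B = {}" "set A \<inter> set C = {}" "set B \<inter> set C = {}"
    by (auto simp: is_path_append)
  have ends: "last A = P ! i" "hd B = P ! Suc i" "last B = P ! j" "hd C = P ! Suc j" "B \<noteq> []"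
    using ij by (simp_all add: A_def B_def C_def last_take_Suc hd_drop_conv_nth last_drop)
  have q': "is_path V E q" "set q \<inter> (set A \<union> set B \<union> set C) = {}"
    using outside_path_disjoint[OF q(1)] P_eq by auto
  have "is_path V E (rev B @ C)"
    using rev_path[OF paths(2)] paths(3) disjoint ends \<open>E (P ! Suc i) (P ! Suc j)\<close>
    unfolding is_path_append by (simp add: last_rev)
  then have "is_path V E (q @ rev B @ C)"
    using q' q(2) ends assms(6) unfolding is_path_append by (auto simp: hd_rev)
  then have "is_path V E (A @ q @ rev B @ C)"
    using paths(1) disjoint q' q(2) ends assms(5) unfolding is_path_append by auto
  moreover have "length (A @ q @ rev B @ C) > length P"
    using q(2) by (subst P_eq) simp
  ultimately show False using longest by fastforce
qed

definition attachments :: "'a \<Rightarrow> nat set" where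
  "attachments w = {i. i < length P \<and> (\<exists>h \<in> component_in (V - set P) E w. E (P ! i) h)}"

lemma attachmentsI:
  "i < length P \<Longrightarrow> h \<in> component_in (V - set P) E w \<Longrightarrow> E (P ! i) h \<Longrightarrow> i \<in> attachments w"
  by (auto simp: attachments_def)

lemma finite_attachments: "finite (attachments w)"
  by (rule finite_subset[of _ "{..<length P}"]) (auto simp: attachments_def)

lemma outside_component_path:
  assumes "w \<in> V - set P" "x \<in> component_in (V - set P) E w" "y \<in> component_in (V - set P) E w"
  shows "\<exists>q. is_path (V - set P) E q \<and> q \<noteq> [] \<and> hd q = x \<and> last q = y"
  using edge_sym assms by (rule component_in_path)

lemma zero_notin_attachments: "w \<in> V - set P \<Longrightarrow> 0 \<notin> attachments w"
  using component_in_subset[of w "V - set P" E] no_outside_nbr_hd nonempty edge_sym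
  by (fastforce simp: attachments_def hd_conv_nth)

lemma Suc_attachment_less:
  assumes w: "w \<in> V - set P" and i: "i \<in> attachments w"
  shows "Suc i < length P"
proof (rule ccontr)
  assume "\<not> Suc i < length P"
  moreover obtain h where "i < length P" "h \<in> V - set P" "E (P ! i) h"
    using i component_in_subset[OF w] by (auto simp: attachments_def)
  ultimately show False using no_outside_nbr_last by (metis Suc_lessI last_conv_nth nonempty diff_Suc_1)
qed

lemma Suc_attachment_notin:
  assumes w: "w \<in> V - set P" and i: "i \<in> attachments w"
  shows "Suc i \<notin> attachments w"
proof
  assume "Suc i \<in> attachments w"
  then obtain h2 where h2: "h2 \<in> component_in (V - set P) E w" "E (P ! Suc i) h2"
    by (auto simp: attachments_def)
  obtain h1 where h1: "h1 \<in> component_in (V - set P) E w" "E (P ! i) h1"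
    using i by (auto simp: attachments_def)
  obtain q where "is_path (V - set P) E q" "q \<noteq> []" "hd q = h1" "last q = h2"
    using outside_component_path[OF w h1(1) h2(1)] by blast
  then show False using no_detour Suc_attachment_less[OF w i] h1(2) edge_sym[OF h2(2)] by blast
qed

lemma nbr_of_outside_component:
  assumes w: "w \<in> V - set P" and x: "x \<in> component_in (V - set P) E w" and "y \<in> V" "E x y"
  shows "y \<in> component_in (V - set P) E w \<or> (\<exists>i \<in> attachments w. y = P ! i)"
proof (cases "y \<in> set P")
  case True
  then obtain i where "i < length P" "y = P ! i" by (auto simp: in_set_conv_nth)
  moreover have "E y x" using \<open>E x y\<close> by (rule edge_sym)
  ultimately show ?thesis using x by (auto intro: attachmentsI)
next
  case False
  then show ?thesis using component_in_subset[OF w] x assms(3,4) by (blast intro: component_in_step)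
qed

lemma card_attachments:
  assumes kc: "k_connected V E k" and w: "w \<in> V - set P"
  shows "k \<le> card (attachments w)"
proof (rule ccontr)
  let ?H = "component_in (V - set P) E w"
  define S where "S = (\<lambda>i. P ! i) ` attachments w"
  assume "\<not> k \<le> card (attachments w)"
  moreover have "card S \<le> card (attachments w)"
    unfolding S_def using finite_attachments by (rule card_image_le)
  moreover have "S \<subseteq> V" using path by (auto simp: S_def attachments_def is_path_def)
  ultimately have con: "connected_on (V - S) E" using kc by (simp add: k_connected_def)
  have wS: "w \<in> V - S" using w by (auto simp: S_def attachments_def)
  \<comment> \<open>The attachment points separate w from the first vertex of P.\<close>
  have "V - S \<subseteq> ?H"
  proof (rule connected_on_closed_subset[OF con wS])
    show "w \<in> ?H" by (rule self_in_component_in)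
  next
    fix x y assume "x \<in> ?H" "y \<in> V - S" "E x y"
    then show "y \<in> ?H" using nbr_of_outside_component[OF w] by (auto simp: S_def)
  qed
  moreover have "P ! 0 \<notin> S"
  proof
    assume "P ! 0 \<in> S"
    then obtain i where "i \<in> attachments w" "P ! 0 = P ! i" by (auto simp: S_def)
    moreover have "distinct P" using path by (simp add: is_path_def)
    ultimately have "i = 0" using nonempty by (simp add: attachments_def nth_eq_iff_index_eq)
    then show False using zero_notin_attachments[OF w] \<open>i \<in> attachments w\<close> by simp
  qed
  moreover have "P ! 0 \<in> set P" using nonempty by simp
  ultimately have "P ! 0 \<in> ?H" using path by (auto simp: is_path_def)
  then show False using component_in_subset[OF w] \<open>P ! 0 \<in> set P\<close> by blast
qed

lemma attachment_successors_nonadjacent: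
  assumes w: "w \<in> V - set P" and i: "i \<in> attachments w" and j: "j \<in> attachments w"
  shows "\<not> E (P ! Suc i) (P ! Suc j)"
proof -
  have "\<not> E (P ! Suc i) (P ! Suc j)" if i: "i \<in> attachments w" and j: "j \<in> attachments w"
    and "i < j" for i j
  proof -
    obtain h1 where h1: "h1 \<in> component_in (V - set P) E w" "E (P ! i) h1"
      using i by (auto simp: attachments_def)
    obtain h2 where h2: "h2 \<in> component_in (V - set P) E w" "E (P ! j) h2"
      using j by (auto simp: attachments_def)
    obtain q where "is_path (V - set P) E q" "q \<noteq> []" "hd q = h1" "last q = h2"
      using outside_component_path[OF w h1(1) h2(1)] by blast
    then show ?thesis
      using no_crossing \<open>i < j\<close> Suc_attachment_less[OF w j] h1(2) edge_sym[OF h2(2)] by blast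
  qed
  then show ?thesis using i j no_loop edge_sym by (metis linorder_neqE_nat)
qed

lemma indep_attachment_successors:
  assumes w: "w \<in> V - set P"
  shows "indep_set E (insert w (insert (P ! 0) ((\<lambda>i. P ! Suc i) ` attachments w)))"
proof -
  have w0: "\<not> E w (P ! 0)" using no_outside_nbr_hd[OF w] nonempty by (simp add: hd_conv_nth)
  have ws: "\<not> E w (P ! Suc i)" if i: "i \<in> attachments w" for i
  proof
    assume "E w (P ! Suc i)"
    then have "E (P ! Suc i) w" by (rule edge_sym)
    with Suc_attachment_less[OF w i] self_in_component_in have "Suc i \<in> attachments w"
      by (rule attachmentsI)
    then show False using Suc_attachment_notin[OF w i] by simp
  qed
  have s0: "\<not> E (P ! 0) (P ! Suc i)" if i: "i \<in> attachments w" for i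
  proof -
    obtain h where "h \<in> component_in (V - set P) E w" "E (P ! i) h"
      using i by (auto simp: attachments_def)
    then show ?thesis using no_rotation Suc_attachment_less[OF w i] component_in_subset[OF w] by blast
  qed
  show ?thesis
  proof (unfold indep_set_def, intro ballI notI)
    fix x y
    assume "x \<in> insert w (insert (P ! 0) ((\<lambda>i. P ! Suc i) ` attachments w))"
      and "y \<in> insert w (insert (P ! 0) ((\<lambda>i. P ! Suc i) ` attachments w))" and "E x y"
    moreover have "E y x" using \<open>E x y\<close> by (rule edge_sym)
    ultimately show False
      using w0 ws s0 attachment_successors_nonadjacent[OF w] no_loop by auto
  qed
qed

lemma large_indep_set_through_outside_vertex:
  assumes kc: "k_connected V E k" and w: "w \<in> V - set P"
  shows "\<exists>I \<subseteq> V. w \<in> I \<and> hd P \<in> I \<and> k + 2 \<le> card I \<and> indep_set E I"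
proof -
  define S where "S = (\<lambda>i. P ! Suc i) ` attachments w"
  note Suc_less = Suc_attachment_less[OF w]
  have distinct: "distinct P" and PV: "set P \<subseteq> V" using path by (auto simp: is_path_def)
  have "inj_on (\<lambda>i. P ! Suc i) (attachments w)"
    by (rule inj_onI) (use distinct Suc_less in \<open>auto simp: nth_eq_iff_index_eq\<close>)
  then have "card S = card (attachments w)" "finite S"
    using finite_attachments by (simp_all add: S_def card_image)
  moreover have "w \<notin> S" "P ! 0 \<notin> S" "w \<noteq> P ! 0"
    using w nonempty Suc_less distinct by (auto simp: S_def nth_eq_iff_index_eq)
  ultimately have "card (insert w (insert (P ! 0) S)) = card (attachments w) + 2" by simp
  moreover have "insert w (insert (P ! 0) S) \<subseteq> V" using w PV nonempty Suc_less by (auto simp: S_def)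
  moreover have "hd P = P ! 0" using nonempty by (simp add: hd_conv_nth)
  ultimately show ?thesis
    using card_attachments[OF kc w] indep_attachment_successors[OF w]
    by (intro exI[of _ "insert w (insert (P ! 0) S)"]) (simp add: S_def)
qed

lemma spanning_if_large_indep_sets_are_small_sides:
  assumes con: "connected_on V E" and kc: "k_connected V E k"
    and side: "\<And>I. I \<subseteq> V \<Longrightarrow> indep_set E I \<Longrightarrow> k + 2 \<le> card I
                 \<Longrightarrow> indep_set E (V - I) \<and> card I \<le> card (V - I)"
  shows "set P = V"
proof (rule ccontr)
  assume "set P \<noteq> V"
  then obtain w where w: "w \<in> V - set P" using path by (auto simp: is_path_def)
  obtain I where I: "I \<subseteq> V" "w \<in> I" "hd P \<in> I" "k + 2 \<le> card I" "indep_set E I"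
    using large_indep_set_through_outside_vertex[OF kc w] by blast
  note I_side = side[OF I(1,5,4)]
  have same_side: "J = I" if J: "J \<subseteq> V" "indep_set E J" "k + 2 \<le> card J" "x \<in> J" "x \<in> I" for J x
    using bipartition_side_unique[OF con J(1,2) _ I(1,5) _ J(4,5)] side[OF J(1-3)] I_side by blast
  have "V - set P \<subseteq> I"
  proof
    fix x assume x: "x \<in> V - set P"
    obtain J where "J \<subseteq> V" "indep_set E J" "k + 2 \<le> card J" "x \<in> J" "hd P \<in> J"
      using large_indep_set_through_outside_vertex[OF kc x] by blast
    then show "x \<in> I" using same_side[of J "hd P"] I(3) by blast
  qed
  then have "card (V - I) = card (set P - I)" using path by (auto simp: is_path_def intro: arg_cong)
  moreover have "last P \<in> I"
  proof -
    interpret rev: longest_path V E "rev P" by (rule longest_path_rev)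
    obtain J where "J \<subseteq> V" "indep_set E J" "k + 2 \<le> card J" "w \<in> J" "hd (rev P) \<in> J"
      using rev.large_indep_set_through_outside_vertex[OF kc] w by auto
    then show ?thesis using same_side[of J w] I(2) nonempty by (simp add: hd_rev)
  qed
  then have "card (set P - I) < card (set P \<inter> I)"
    using path nonempty I_side I(3) by (blast intro: path_alternation_card)
  moreover have "card (set P \<inter> I) \<le> card I"
    using I(1) finite_V by (intro card_mono) (auto intro: finite_subset)
  ultimately show False using I_side by simp
qed

end

theorem theorem3:
  fixes V :: "'a set" and E :: "'a \<Rightarrow> 'a \<Rightarrow> bool" and k :: nat
  assumes "simple_graph V E"
    and "k \<ge> 1"
    and "k_connected V E k"
    and "card V \<ge> 9"
  defines "n \<equiv> real (card V)"
    and "e \<equiv> real (num_edges V E)"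
    and "\<delta> \<equiv> real (min_deg V E)"
    and "\<Delta> \<equiv> real (max_deg V E)"
    and "kk \<equiv> real k"
  assumes "zagreb1 V E \<ge> (n - kk - 2) * \<Delta>^2 + e^2 / (2 * (kk + 2)) + (kk + 2) * \<Delta>^3 / (2 * \<delta>)
     \<or> forgotten_index V E \<le> (n - kk - 2) * \<delta>^3 + \<delta> * (2 * (kk + 2)^2 * \<delta>^2 - e^2) / (kk + 2)
     \<or> forgotten_index V E \<le> (n - kk - 2) * \<delta>^3 + \<delta> / (kk + 2) *
          (2 * (kk + 2) * ((kk + 2) * \<delta>^2 + e^2 / (n - kk - 2)) - e^2 - 2 * (kk + 2) * (n - kk - 2) * \<Delta>^2)
     \<or> inverse_degree V E \<le> (n - kk - 2) / \<Delta> + (2 * (kk + 2)^2 * \<delta>^2 - e^2) / ((kk + 2) * \<Delta>^3)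
     \<or> inverse_degree V E \<le> (n - kk - 2) / \<Delta> + 1 / ((kk + 2) * \<Delta>^3) *
          (2 * (kk + 2) * ((kk + 2) * \<delta>^2 + e^2 / (n - kk - 2)) - e^2 - 2 * (kk + 2) * (n - kk - 2) * \<Delta>^2)"
  shows "traceable V E"
proof -
  interpret sgraph V E by (rule sgraph.intro) (fact assms(1))
  have con: "connected_on V E" using assms(3,2) by (rule k_connected_imp_connected_on)
  have V: "V \<noteq> {}" "2 \<le> card V" using assms(4) by auto
  have cond: "index_condition n kk e \<delta> \<Delta> (zagreb1 V E) (forgotten_index V E) (inverse_degree V E)"
    using assms(10) unfolding index_condition_def .
  have "0 < min_deg V E" using con V(2) by (rule min_deg_pos)
  then have side: "indep_set E (V - I) \<and> card I \<le> card (V - I)"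
    if "I \<subseteq> V" "indep_set E I" "k + 2 \<le> card I" for I
    using index_condition_forces_regular_graph[OF _ that cond[unfolded n_def kk_def e_def \<delta>_def \<Delta>_def]]
      regular_indep_set_bipartition that by blast
  obtain P where "is_path V E P" "P \<noteq> []" "\<And>q. is_path V E q \<Longrightarrow> length q \<le> length P"
    using longest_path_exists[OF V(1)] by blast
  then interpret longest_path V E P by unfold_locales
  have "set P = V" using con assms(3) side by (rule spanning_if_large_indep_sets_are_small_sides)
  with path show ?thesis by (rule traceable_if_is_path)
qed

end
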